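(* Let $\mathcal{M}=(S,A,\mathcal{U},R,s_\iota,\gamma)$ be an $(s,a)$-rectangular RMDP, $s\in S$ and $a\in A$. If there exists $\vec x\in\mathbb{R}^S$ such that \[R(s,a)+\gamma\inf_{\vec u\in\mathcal{U}_{(s,a)}}\sum_{s'\in S}P_{\vec u}(s,a)(s')\vec x(s')<\mathfrak{B}(\vec x)(s)-\frac{\gamma}{1-\gamma}\,\mathsf{span}(\mathfrak{B}(\vec x)-\vec x),\] then action $a$ is suboptimal for state $s$.
   Context: An RMDP $(S,A,\mathcal{U},R,s_\iota,\gamma)$ has finite states $S$, finite actions $A$, rewards $R\colon S\times A\to\mathbb{R}$, initial state $s_\iota$, discount $\gamma\in(0,1)$, and $(s,a)$-rectangular uncertainty set $\mathcal{U}=\prod_{(s,a)}\mathcal{U}_{(s,a)}$, where each $\vec u\in\mathcal{U}_{(s,a)}$ is a probability vector over successor states giving $P_{\vec u}(s,a)(s')=\vec u(s')$. The robust Bellman operator is $\mathfrak{B}(\vec x)(s)=\max_{a\in A}R(s,a)+\gamma\inf_{\vec u\in\mathcal{U}_{(s,a)}}\sum_{s'}P_{\vec u}(s,a)(s')\vec x(s')$ for $\vec x\in\mathbb{R}^S$; $\mathsf{span}(\vec y)=\max_s\vec y(s)-\min_s\vec y(s)$. Let $\vec v$ be the optimal robust value function $\vec v(s)=\sup_\pi\inf_{\vec u\in\mathcal{U}}\mathbb{E}_{\pi,P_{\vec u}}[\sum_t\gamma^tR(s_t,a_t)\mid s_0=s]$, which is the fixed point of $\mathfrak{B}$. Action $a$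 is suboptimal for state $s$ if $R(s,a)+\gamma\inf_{\vec u\in\mathcal{U}_{(s,a)}}\sum_{s'}P_{\vec u}(s,a)(s')\vec v(s')<\vec v(s)$. *)

theory Defs
  imports "HOL-Analysis.Analysis"
begin

text \<open>R : rewards, gam : discount, U s a : the uncertainty set U_(s,a), a set of
  probability vectors over successor states.\<close>

definition rmdp :: "('s::finite \<Rightarrow> 'a::finite \<Rightarrow> real) \<Rightarrow> real \<Rightarrow> ('s \<Rightarrow> 'a \<Rightarrow> ('s \<Rightarrow> real) set) \<Rightarrow> bool" where
  "rmdp R gam U \<longleftrightarrow> 0 < gam \<and> gam < 1 \<and>
     (\<forall>s a. U s a \<noteq> {} \<and> (\<forall>u\<in>U s a. (\<forall>s'. 0 \<le> u s') \<and> (\<Sum>s'\<in>UNIV. u s') = 1))"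

definition robust_q :: "('s::finite \<Rightarrow> 'a::finite \<Rightarrow> real) \<Rightarrow> real \<Rightarrow> ('s \<Rightarrow> 'a \<Rightarrow> ('s \<Rightarrow> real) set)
    \<Rightarrow> ('s \<Rightarrow> real) \<Rightarrow> 's \<Rightarrow> 'a \<Rightarrow> real" where
  "robust_q R gam U x s a = R s a + gam * (INF u\<in>U s a. \<Sum>s'\<in>UNIV. u s' * x s')"

definition bellman :: "('s::finite \<Rightarrow> 'a::finite \<Rightarrow> real) \<Rightarrow> real \<Rightarrow> ('s \<Rightarrow> 'a \<Rightarrow> ('s \<Rightarrow> real) set)
    \<Rightarrow> ('s \<Rightarrow> real) \<Rightarrow> ('s \<Rightarrow> real)" where
  "bellman R gam U x s = Max (range (robust_q R gam U x s))"

definition span :: "('s::finite \<Rightarrow> real) \<Rightarrow> real" where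
  "span y = Max (range y) - Min (range y)"

text \<open>Optimal robust value function, characterised (as in the context) as the
  fixed point of the robust Bellman operator (unique, since it is a gam-contraction).\<close>
definition opt_value :: "('s::finite \<Rightarrow> 'a::finite \<Rightarrow> real) \<Rightarrow> real \<Rightarrow> ('s \<Rightarrow> 'a \<Rightarrow> ('s \<Rightarrow> real) set)
    \<Rightarrow> ('s \<Rightarrow> real)" where
  "opt_value R gam U = (THE v. bellman R gam U v = v)"

definition suboptimal :: "('s::finite \<Rightarrow> 'a::finite \<Rightarrow> real) \<Rightarrow> real \<Rightarrow> ('s \<Rightarrow> 'a \<Rightarrow> ('s \<Rightarrow> real) set)
    \<Rightarrow> 's \<Rightarrow> 'a \<Rightarrow> bool" where
  "suboptimal R gam U s a \<longleftrightarrow> robust_q R gam U (opt_value R gam U) s a < opt_value R gam U s"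

end

theory Submission
  imports Defs
begin

text \<open>The robust Bellman operator \<open>B\<close> is monotone and satisfies \<open>B (x + c) = B x + \<gamma> c\<close> for
  constants \<open>c\<close>. Writing \<open>m\<close> and \<open>M\<close> for the minimum and maximum of \<open>B x - x\<close>, these two
  properties trap the fixed point: \<open>x + m / (1 - \<gamma>) \<le> v \<le> x + M / (1 - \<gamma>)\<close>. Hence the
  robust Q-value of \<open>(s, a)\<close> at \<open>v\<close> exceeds the one at \<open>x\<close> by at most \<open>\<gamma> M / (1 - \<gamma>)\<close>,
  while \<open>v s = B v s\<close> exceeds \<open>B x s\<close> by at least \<open>\<gamma> m / (1 - \<gamma>)\<close>; the gap between these
  two bounds is exactly \<open>\<gamma> / (1 - \<gamma>)\<close> times the span of \<open>B x - x\<close>.\<close>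

lemma fixpoint_of_contractive_iterate:
  fixes f :: "'a::complete_space \<Rightarrow> 'a"
  assumes "0 \<le> c" "c < 1" and "\<And>x y. dist ((f ^^ k) x) ((f ^^ k) y) \<le> c * dist x y"
  shows "\<exists>p. f p = p"
proof -
  obtain p where p: "(f ^^ k) p = p" and unique: "\<And>q. (f ^^ k) q = q \<Longrightarrow> q = p"
    using banach_fix_type[of c "f ^^ k"] assms by metis
  have "(f ^^ k) (f p) = f p"
    by (metis p funpow_swap1)
  then show ?thesis
    using unique by blast
qed

lemma infnorm_contraction_has_fixpoint:
  fixes f :: "'a::euclidean_space \<Rightarrow> 'a"
  assumes c: "0 \<le> c" "c < 1" and contr: "\<And>x y. infnorm (f x - f y) \<le> c * infnorm (x - y)"
  shows "\<exists>p. f p = p"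
proof -
  have iter: "infnorm ((f ^^ k) x - (f ^^ k) y) \<le> c ^ k * infnorm (x - y)" for k x y
  proof (induction k)
    case (Suc k)
    then show ?case
      using contr[of "(f ^^ k) x" "(f ^^ k) y"] mult_left_mono[OF Suc c(1)] by simp
  qed simp
  \<comment> \<open>\<open>f\<close> need not contract the Euclidean metric, but since \<open>norm \<le> sqrt DIM('a) * infnorm\<close>,
    a high enough iterate of \<open>f\<close> does.\<close>
  define n where "n = sqrt DIM('a)"
  have "n > 0"
    by (simp add: n_def)
  then obtain k where k: "c ^ k < 1 / n"
    using real_arch_pow_inv[of "1 / n" c] c by auto
  then have "n * c ^ k < 1"
    using \<open>n > 0\<close> by (simp add: field_simps)
  moreover have "dist ((f ^^ k) x) ((f ^^ k) y) \<le> (n * c ^ k) * dist x y" for x y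
  proof -
    have "dist ((f ^^ k) x) ((f ^^ k) y) \<le> n * infnorm ((f ^^ k) x - (f ^^ k) y)"
      unfolding dist_norm n_def by (rule norm_le_infnorm)
    also have "\<dots> \<le> n * (c ^ k * infnorm (x - y))"
      using iter \<open>n > 0\<close> by (simp add: mult_left_mono)
    also have "\<dots> \<le> n * (c ^ k * dist x y)"
      using infnorm_le_norm[of "x - y"] \<open>n > 0\<close> c by (simp add: dist_norm mult_left_mono)
    finally show ?thesis
      by simp
  qed
  ultimately show ?thesis
    using fixpoint_of_contractive_iterate[where c = "n * c ^ k" and f = f and k = k] \<open>n > 0\<close> c by simp
qed

lemma infnorm_le_cart:
  fixes x :: "real^'n"
  assumes "\<And>i. \<bar>x $ i\<bar> \<le> d"
  shows "infnorm x \<le> d"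
  unfolding infnorm_cart using assms by (intro cSup_least) auto

locale shift_contraction =
  fixes gam :: real and T :: "('s::finite \<Rightarrow> real) \<Rightarrow> 's \<Rightarrow> real"
  assumes discount: "0 \<le> gam" "gam < 1"
    and shift_le: "(\<And>t. x t \<le> y t + c) \<Longrightarrow> T x t \<le> T y t + gam * c"
begin

lemma shift: "T (\<lambda>t. x t + c) t = T x t + gam * c"
  using shift_le[of "\<lambda>t. x t + c" x c t] shift_le[of x "\<lambda>t. x t + c" "- c" t] by simp

lemma contraction:
  assumes "\<And>t. \<bar>x t - y t\<bar> \<le> d"
  shows "\<bar>T x t - T y t\<bar> \<le> gam * d"
proof -
  have "x t \<le> y t + d" "y t \<le> x t + d" for t
    using assms[of t] by (simp_all add: abs_le_iff)
  then show ?thesis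
    using shift_le[of x y d t] shift_le[of y x d t] by (simp add: abs_le_iff)
qed

lemma le_fixpoint:
  assumes fixed: "T v = v" and sub: "\<And>t. y t \<le> T y t"
  shows "y t \<le> v t"
proof -
  define d where "d = Max (range (\<lambda>t. y t - v t))"
  have d: "y t \<le> v t + d" for t
    using Max_ge[of "range (\<lambda>t. y t - v t)" "y t - v t"] by (simp add: d_def algebra_simps)
  have "d \<in> range (\<lambda>t. y t - v t)"
    unfolding d_def by (rule Max_in) auto
  then obtain t0 where t0: "d = y t0 - v t0"
    by blast
  have "y t0 \<le> v t0 + gam * d"
    using sub[of t0] shift_le[of y v d t0, OF d] fixed by simp
  then have "d \<le> gam * d"
    using t0 by linarith
  then have "d \<le> 0"
    using discount by (simp add: mult_le_cancel_right1)
  then show ?thesis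
    using d[of t] by linarith
qed

lemma fixpoint_le:
  assumes fixed: "T v = v" and super: "\<And>t. T y t \<le> y t"
  shows "v t \<le> y t"
proof -
  define d where "d = Max (range (\<lambda>t. v t - y t))"
  have d: "v t \<le> y t + d" for t
    using Max_ge[of "range (\<lambda>t. v t - y t)" "v t - y t"] by (simp add: d_def algebra_simps)
  have "d \<in> range (\<lambda>t. v t - y t)"
    unfolding d_def by (rule Max_in) auto
  then obtain t0 where t0: "d = v t0 - y t0"
    by blast
  have "v t0 \<le> y t0 + gam * d"
    using super[of t0] shift_le[of v y d t0, OF d] fixed by simp
  then have "d \<le> gam * d"
    using t0 by linarith
  then have "d \<le> 0"
    using discount by (simp add: mult_le_cancel_right1)
  then show ?thesis
    using d[of t] by linarith
qed

lemma fixpoint_unique: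
  assumes "T v = v" "T w = w"
  shows "v = w"
proof
  fix t
  show "v t = w t"
    using le_fixpoint[OF assms(2), of v t] fixpoint_le[OF assms(2), of v t] assms(1)
    by (simp add: antisym)
qed

lemma fixpoint_exists: "\<exists>v. T v = v"
proof -
  define F :: "real^'s \<Rightarrow> real^'s" where "F w = (\<chi> t. T (vec_nth w) t)" for w
  have "\<bar>T (vec_nth w) t - T (vec_nth w') t\<bar> \<le> gam * infnorm (w - w')" for w w' t
    by (rule contraction) (use component_le_infnorm_cart[of "w - w'"] in simp)
  then have "infnorm (F w - F w') \<le> gam * infnorm (w - w')" for w w'
    by (intro infnorm_le_cart) (simp add: F_def)
  then obtain p where "F p = p"
    using infnorm_contraction_has_fixpoint discount by blast
  then have "T (vec_nth p) = vec_nth p"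
    by (metis F_def vec_lambda_inverse UNIV_I)
  then show ?thesis
    by blast
qed

lemma the_fixpoint: "T (THE v. T v = v) = (THE v. T v = v)"
proof -
  obtain v where v: "T v = v"
    using fixpoint_exists by blast
  then show ?thesis
    by (rule theI[where P = "\<lambda>v. T v = v"]) (use v fixpoint_unique in blast)
qed

lemma fixpoint_bounds:
  assumes fixed: "T v = v"
  shows "x t + Min (range (\<lambda>t. T x t - x t)) / (1 - gam) \<le> v t"
    and "v t \<le> x t + Max (range (\<lambda>t. T x t - x t)) / (1 - gam)"
proof -
  define m where "m = Min (range (\<lambda>t. T x t - x t))"
  define M where "M = Max (range (\<lambda>t. T x t - x t))"
  have "m + gam * (m / (1 - gam)) = m / (1 - gam)" "M + gam * (M / (1 - gam)) = M / (1 - gam)"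
    using discount by (simp_all add: field_simps)
  moreover have "m \<le> T x t - x t" "T x t - x t \<le> M" for t
    by (simp_all add: m_def M_def Min_le_iff Max_ge_iff)
  ultimately have "x t + m / (1 - gam) \<le> T (\<lambda>t. x t + m / (1 - gam)) t"
    and "T (\<lambda>t. x t + M / (1 - gam)) t \<le> x t + M / (1 - gam)" for t
    unfolding shift by (smt (verit))+
  then show "x t + m / (1 - gam) \<le> v t" "v t \<le> x t + M / (1 - gam)"
    using le_fixpoint[OF fixed, of "\<lambda>t. x t + m / (1 - gam)"]
      fixpoint_le[OF fixed, of "\<lambda>t. x t + M / (1 - gam)"] by blast+
qed

end

lemma cINF_le_shift:
  fixes f g :: "'i \<Rightarrow> 'b::{conditionally_complete_lattice, ordered_ab_group_add}"
  assumes "X \<noteq> {}" "bdd_below (f ` X)" "\<And>u. u \<in> X \<Longrightarrow> f u \<le> g u + c"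
  shows "(INF u\<in>X. f u) \<le> (INF u\<in>X. g u) + c"
proof -
  have "(INF u\<in>X. f u) - c \<le> (INF u\<in>X. g u)"
  proof (rule cINF_greatest[OF assms(1)])
    fix u
    assume "u \<in> X"
    then have "(INF u\<in>X. f u) \<le> g u + c"
      using cINF_lower[OF assms(2)] assms(3) order_trans by blast
    then show "(INF u\<in>X. f u) - c \<le> g u"
      by (simp add: diff_le_eq)
  qed
  then show ?thesis
    by (simp add: diff_le_eq)
qed

lemma expectation_shift_le:
  fixes u x y :: "'s::finite \<Rightarrow> real"
  assumes "\<And>t. 0 \<le> u t" "(\<Sum>t\<in>UNIV. u t) = 1" "\<And>t. x t \<le> y t + c"
  shows "(\<Sum>t\<in>UNIV. u t * x t) \<le> (\<Sum>t\<in>UNIV. u t * y t) + c"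
proof -
  have "(\<Sum>t\<in>UNIV. u t * x t) \<le> (\<Sum>t\<in>UNIV. u t * (y t + c))"
    by (intro sum_mono mult_left_mono) (simp_all add: assms)
  also have "\<dots> = (\<Sum>t\<in>UNIV. u t * y t) + c * (\<Sum>t\<in>UNIV. u t)"
    by (simp add: algebra_simps sum.distrib sum_distrib_left)
  finally show ?thesis
    using assms(2) by simp
qed

lemma robust_q_shift_le:
  assumes rmdp: "rmdp R gam U" and le: "\<And>t. x t \<le> y t + c"
  shows "robust_q R gam U x s a \<le> robust_q R gam U y s a + gam * c"
proof -
  have prob: "\<And>t. 0 \<le> u t" "(\<Sum>t\<in>UNIV. u t) = 1" if "u \<in> U s a" for u
    using rmdp that by (auto simp: rmdp_def)
  have "Min (range x) \<le> (\<Sum>t\<in>UNIV. u t * x t)" if "u \<in> U s a" for u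
    using expectation_shift_le[OF prob[OF that], of "\<lambda>_. Min (range x)" x 0] prob(2)[OF that]
    by (simp add: sum_distrib_right[symmetric])
  then have "bdd_below ((\<lambda>u. \<Sum>t\<in>UNIV. u t * x t) ` U s a)"
    by (rule bdd_belowI2)
  then have "(INF u\<in>U s a. \<Sum>t\<in>UNIV. u t * x t) \<le> (INF u\<in>U s a. \<Sum>t\<in>UNIV. u t * y t) + c"
    using rmdp expectation_shift_le[OF prob le] by (intro cINF_le_shift) (auto simp: rmdp_def)
  then show ?thesis
    using rmdp mult_left_mono[of _ _ gam] unfolding robust_q_def rmdp_def
    by (fastforce simp: distrib_left)
qed

lemma bellman_shift_le:
  assumes "rmdp R gam U" "\<And>t. x t \<le> y t + c"
  shows "bellman R gam U x s \<le> bellman R gam U y s + gam * c"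
proof -
  have "bellman R gam U x s \<in> range (robust_q R gam U x s)"
    unfolding bellman_def by (rule Max_in) auto
  then obtain a where "bellman R gam U x s = robust_q R gam U x s a"
    by blast
  moreover have "robust_q R gam U y s a \<le> bellman R gam U y s"
    unfolding bellman_def by simp
  ultimately show ?thesis
    using robust_q_shift_le[of R gam U x y c s a, OF assms] by linarith
qed

lemma rmdp_bellman_shift_contraction:
  "rmdp R gam U \<Longrightarrow> shift_contraction gam (bellman R gam U)"
  by unfold_locales (auto simp: rmdp_def intro: bellman_shift_le)

lemma opt_value_fixpoint:
  "rmdp R gam U \<Longrightarrow> bellman R gam U (opt_value R gam U) = opt_value R gam U"
  unfolding opt_value_def by (rule shift_contraction.the_fixpoint[OF rmdp_bellman_shift_contraction])

theorem theorem27: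
  fixes R :: "'s::finite \<Rightarrow> 'a::finite \<Rightarrow> real" and gam :: real
    and U :: "'s \<Rightarrow> 'a \<Rightarrow> ('s \<Rightarrow> real) set" and s :: 's and a :: 'a
  assumes "rmdp R gam U"
    and "\<exists>x :: 's \<Rightarrow> real. robust_q R gam U x s a
           < bellman R gam U x s - gam / (1 - gam) * span (\<lambda>t. bellman R gam U x t - x t)"
  shows "suboptimal R gam U s a"
proof -
  interpret shift_contraction gam "bellman R gam U"
    using rmdp_bellman_shift_contraction[OF assms(1)] .
  obtain x where x: "robust_q R gam U x s a
      < bellman R gam U x s - gam / (1 - gam) * span (\<lambda>t. bellman R gam U x t - x t)"
    using assms(2) by blast
  define v where "v = opt_value R gam U"
  define m where "m = Min (range (\<lambda>t. bellman R gam U x t - x t))"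
  define M where "M = Max (range (\<lambda>t. bellman R gam U x t - x t))"
  have v: "bellman R gam U v = v"
    unfolding v_def using opt_value_fixpoint[OF assms(1)] .
  have lower: "x t \<le> v t + - (m / (1 - gam))" for t
    using fixpoint_bounds(1)[OF v, of x t] by (simp add: m_def)
  have upper: "v t \<le> x t + M / (1 - gam)" for t
    using fixpoint_bounds(2)[OF v, of t x] by (simp add: M_def)
  define k where "k = gam / (1 - gam)"
  have "robust_q R gam U v s a \<le> robust_q R gam U x s a + k * M"
    using robust_q_shift_le[OF assms(1) upper] by (simp add: k_def)
  moreover have "bellman R gam U x s + k * m \<le> v s"
    using shift_le[of x v "- (m / (1 - gam))" s, OF lower] v by (simp add: k_def)
  moreover have "span (\<lambda>t. bellman R gam U x t - x t) = M - m"
    by (simp add: span_def m_def M_def)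
  ultimately show ?thesis
    using x unfolding suboptimal_def v_def[symmetric] k_def[symmetric]
    by (simp add: right_diff_distrib)
qed

end
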